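(* Let $F,G$ be absolutely continuous distribution functions with densities $f,g$. Let $X_1,\ldots,X_{n_1}$ be independent random variables with $P(X_i\leq x)=[F(x)]^{\alpha_i}$ for $i=1,\ldots,p_1$ and $P(X_i\leq x)=[G(x)]^{\alpha_i}$ for $i=p_1+1,\ldots,n_1$, and let $Y_1,\ldots,Y_{n_2}$ be independent random variables with $P(Y_i\leq x)=[F(x)]^{\beta_i}$ for $i=1,\ldots,p_2$ and $P(Y_i\leq x)=[G(x)]^{\beta_i}$ for $i=p_2+1,\ldots,n_2$, all $\alpha_i,\beta_i>0$. If $\sum_{i=1}^{p_1}\alpha_i>\sum_{i=1}^{p_2}\beta_i$ and $\sum_{i=p_1+1}^{n_1}\alpha_i>\sum_{i=p_2+1}^{n_2}\beta_i$, then $X_{n_1:n_1}\geq_{rh}Y_{n_2:n_2}$.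
   Context: $X_{n:n}=\max(X_1,\ldots,X_n)$. For $X\sim F_X$, $Y\sim F_Y$, $Y\leq_{rh}X$ (equivalently $X\geq_{rh}Y$; reversed hazard rate order) means $F_X(x)/F_Y(x)$ is increasing in $x$ over the union of the supports. *)

theory Defs
  imports "HOL-Probability.Probability"
begin

definition abs_cont_cdf :: "(real \<Rightarrow> real) \<Rightarrow> (real \<Rightarrow> real) \<Rightarrow> bool" where
  "abs_cont_cdf F f \<longleftrightarrow>
     f \<in> borel_measurable lborel \<and> (\<forall>x. 0 \<le> f x) \<and> integrable lborel f \<and>
     integral\<^sup>L lborel f = 1 \<and> (\<forall>x. F x = (LINT t:{..x}|lborel. f t))"

definition cdf_ratio :: "(real \<Rightarrow> real) \<Rightarrow> (real \<Rightarrow> real) \<Rightarrow> real \<Rightarrow> ereal" where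
  "cdf_ratio FX FY x = (if FY x = 0 then \<infinity> else ereal (FX x / FY x))"

text \<open>Reversed hazard rate order: FY \<le>rh FX iff FX/FY is increasing on the union of the
  supports, i.e. on the points where FX or FY is positive.\<close>
definition rh_le :: "(real \<Rightarrow> real) \<Rightarrow> (real \<Rightarrow> real) \<Rightarrow> bool" where
  "rh_le FY FX \<longleftrightarrow>
     (\<forall>x y. x \<le> y \<and> (0 < FX x \<or> 0 < FY x) \<longrightarrow> cdf_ratio FX FY x \<le> cdf_ratio FX FY y)"

definition max_cdf :: "'a measure \<Rightarrow> (nat \<Rightarrow> 'a \<Rightarrow> real) \<Rightarrow> nat \<Rightarrow> real \<Rightarrow> real" where
  "max_cdf M X n x = measure M {\<omega> \<in> space M. Max ((\<lambda>i. X i \<omega>) ` {1..n}) \<le> x}"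

end

theory Submission
  imports Defs
begin

(* Independence makes the distribution function of each maximum a product
   F(x)^a G(x)^b of powers, with a, b the sums of the exponents attached to F
   and G.  The ratio of two such products is F(x)^(a - a') G(x)^(b - b'),
   which increases in x because F and G do and both exponent differences are
   positive. *)

lemma abs_cont_cdf_nonneg:
  assumes "abs_cont_cdf F f"
  shows "0 \<le> F x"
  using assms unfolding abs_cont_cdf_def set_lebesgue_integral_def
  by (auto intro!: integral_nonneg_AE split: split_indicator)

lemma abs_cont_cdf_mono:
  assumes "abs_cont_cdf F f"
  shows "mono F"
proof (rule monoI)
  fix x y :: real
  assume "x \<le> y"
  have f: "integrable lborel f" "\<And>t. 0 \<le> f t"
    and F: "\<And>x. F x = (LINT t:{..x}|lborel. f t)"
    using assms unfolding abs_cont_cdf_def by auto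
  show "F x \<le> F y"
    unfolding F set_lebesgue_integral_def
    using \<open>x \<le> y\<close> f(2)
    by (intro integral_mono integrable_mult_indicator f(1)) (auto split: split_indicator)
qed

lemma max_cdf_eq_prod:
  assumes "prob_space M" "prob_space.indep_vars M (\<lambda>_. borel) X {1..n}" "1 \<le> n"
  shows "max_cdf M X n x = (\<Prod>i\<in>{1..n}. measure M {\<omega> \<in> space M. X i \<omega> \<le> x})"
proof -
  interpret prob_space M by fact
  have indep: "indep_sets (\<lambda>i. {X i -` A \<inter> space M | A. A \<in> sets borel}) {1..n}"
    using assms(2) unfolding indep_vars_def2 by auto
  have "{\<omega> \<in> space M. Max ((\<lambda>i. X i \<omega>) ` {1..n}) \<le> x} = (\<Inter>i\<in>{1..n}. X i -` {..x} \<inter> space M)"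
    using assms(3) by (auto simp: Max_le_iff)
  moreover have "prob (\<Inter>i\<in>{1..n}. X i -` {..x} \<inter> space M) =
      (\<Prod>i\<in>{1..n}. prob (X i -` {..x} \<inter> space M))"
    using assms(3) by (intro indep_setsD[OF indep]) (auto intro!: exI[of _ "{..x}"])
  moreover have "X i -` {..x} \<inter> space M = {\<omega> \<in> space M. X i \<omega> \<le> x}" for i
    by auto
  ultimately show ?thesis
    unfolding max_cdf_def by simp
qed

lemma max_cdf_eq_prod_powr:
  assumes "prob_space M" "prob_space.indep_vars M (\<lambda>_. borel) X {1..n}" "1 \<le> n" "p \<le> n"
    and "\<And>i x. i \<in> {1..p} \<Longrightarrow> measure M {\<omega> \<in> space M. X i \<omega> \<le> x} = F x powr a i"
    and "\<And>i x. i \<in> {p+1..n} \<Longrightarrow> measure M {\<omega> \<in> space M. X i \<omega> \<le> x} = G x powr a i"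
  shows "max_cdf M X n = (\<lambda>x. (\<Prod>i\<in>{1..p}. F x powr a i) * (\<Prod>i\<in>{p+1..n}. G x powr a i))"
proof
  fix x
  have "{1..n} = {1..p} \<union> {p+1..n}"
    using assms(4) by auto
  then have "max_cdf M X n x = (\<Prod>i\<in>{1..p}. measure M {\<omega> \<in> space M. X i \<omega> \<le> x}) *
      (\<Prod>i\<in>{p+1..n}. measure M {\<omega> \<in> space M. X i \<omega> \<le> x})"
    unfolding max_cdf_eq_prod[OF assms(1-3)] by (simp add: prod.union_disjoint)
  then show "max_cdf M X n x = (\<Prod>i\<in>{1..p}. F x powr a i) * (\<Prod>i\<in>{p+1..n}. G x powr a i)"
    using assms(5,6) by simp
qed

lemma rh_leI:
  assumes "mono FY" "\<And>x. 0 \<le> FY x" "\<And>x. FY x = 0 \<Longrightarrow> FX x = 0"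
    and "\<And>x y. x \<le> y \<Longrightarrow> 0 < FY x \<Longrightarrow> FX x / FY x \<le> FX y / FY y"
  shows "rh_le FY FX"
  unfolding rh_le_def
proof (intro allI impI, elim conjE)
  fix x y :: real
  assume "x \<le> y" and "0 < FX x \<or> 0 < FY x"
  then have "0 < FY x"
    using assms(2,3) by (metis less_irrefl order_le_less)
  moreover have "FY x \<le> FY y"
    using assms(1) \<open>x \<le> y\<close> by (rule monoD)
  ultimately show "cdf_ratio FX FY x \<le> cdf_ratio FX FY y"
    using assms(4)[OF \<open>x \<le> y\<close>] unfolding cdf_ratio_def by simp
qed

lemma prod_powr_nonneg: "0 \<le> (\<Prod>i\<in>S. (u::real) powr w i)"
  by (intro prod_nonneg) simp

lemma prod_powr_mono:
  fixes u v :: real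
  assumes "\<And>i. i \<in> S \<Longrightarrow> 0 \<le> w i" "0 \<le> u" "u \<le> v"
  shows "(\<Prod>i\<in>S. u powr w i) \<le> (\<Prod>i\<in>S. v powr w i)"
  using assms by (intro prod_mono) (auto intro: powr_mono2)

lemma prod_powr_ratio_mono:
  fixes u v :: real
  assumes "finite S" "S \<noteq> {}" "sum b T < sum a S" "0 \<le> u" "u \<le> v"
  shows "(\<Prod>i\<in>S. u powr a i) / (\<Prod>i\<in>T. u powr b i) \<le> (\<Prod>i\<in>S. v powr a i) / (\<Prod>i\<in>T. v powr b i)"
proof (cases "u = 0")
  case True
  then have "(\<Prod>i\<in>S. u powr a i) = 0"
    using assms(1,2) by (simp add: card_gt_0_iff)
  then show ?thesis
    by (simp add: divide_nonneg_nonneg prod_powr_nonneg)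
next
  case False
  then have "0 < u" "0 < v"
    using assms(4,5) by auto
  then have "u powr (sum a S - sum b T) \<le> v powr (sum a S - sum b T)"
    using assms(3,5) by (intro powr_mono2) auto
  with \<open>0 < u\<close> \<open>0 < v\<close> show ?thesis
    by (simp add: powr_sum powr_diff)
qed

(* A1 and B1 must be nonempty so that the numerator vanishes wherever the denominator
   does; an empty A2 or B2 just contributes the factor 1. *)
lemma rh_le_prod_powr:
  fixes F G :: "real \<Rightarrow> real"
  assumes "mono F" "mono G" "\<And>x. 0 \<le> F x" "\<And>x. 0 \<le> G x"
    and "finite A1" "finite A2" "finite B1" "finite B2" "A1 \<noteq> {}" "B1 \<noteq> {}"
    and "\<And>i. i \<in> A2 \<union> B2 \<Longrightarrow> 0 \<le> \<beta> i"
    and "sum \<beta> A2 < sum \<alpha> A1" "sum \<beta> B2 < sum \<alpha> B1"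
  shows "rh_le (\<lambda>x. (\<Prod>i\<in>A2. F x powr \<beta> i) * (\<Prod>i\<in>B2. G x powr \<beta> i))
                (\<lambda>x. (\<Prod>i\<in>A1. F x powr \<alpha> i) * (\<Prod>i\<in>B1. G x powr \<alpha> i))"
proof (rule rh_leI)
  show "mono (\<lambda>x. (\<Prod>i\<in>A2. F x powr \<beta> i) * (\<Prod>i\<in>B2. G x powr \<beta> i))"
    using assms(1-4,11)
    by (intro monoI mult_mono prod_powr_mono prod_powr_nonneg) (auto dest: monoD)
next
  fix x
  assume "(\<Prod>i\<in>A2. F x powr \<beta> i) * (\<Prod>i\<in>B2. G x powr \<beta> i) = 0"
  then have "F x = 0 \<or> G x = 0"
    using assms(6,8) by (auto simp: prod_zero_iff)
  then show "(\<Prod>i\<in>A1. F x powr \<alpha> i) * (\<Prod>i\<in>B1. G x powr \<alpha> i) = 0"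
    using assms(5,7,9,10) by auto
next
  fix x y :: real
  assume "x \<le> y"
  then have "(\<Prod>i\<in>A1. F x powr \<alpha> i) / (\<Prod>i\<in>A2. F x powr \<beta> i) *
        ((\<Prod>i\<in>B1. G x powr \<alpha> i) / (\<Prod>i\<in>B2. G x powr \<beta> i))
      \<le> (\<Prod>i\<in>A1. F y powr \<alpha> i) / (\<Prod>i\<in>A2. F y powr \<beta> i) *
        ((\<Prod>i\<in>B1. G y powr \<alpha> i) / (\<Prod>i\<in>B2. G y powr \<beta> i))"
    using assms
    by (intro mult_mono prod_powr_ratio_mono divide_nonneg_nonneg prod_powr_nonneg)
       (auto dest: monoD)
  then show "(\<Prod>i\<in>A1. F x powr \<alpha> i) * (\<Prod>i\<in>B1. G x powr \<alpha> i) /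
        ((\<Prod>i\<in>A2. F x powr \<beta> i) * (\<Prod>i\<in>B2. G x powr \<beta> i))
      \<le> (\<Prod>i\<in>A1. F y powr \<alpha> i) * (\<Prod>i\<in>B1. G y powr \<alpha> i) /
        ((\<Prod>i\<in>A2. F y powr \<beta> i) * (\<Prod>i\<in>B2. G y powr \<beta> i))"
    by (simp add: times_divide_times_eq)
qed (use assms(3,4) in \<open>auto intro: mult_nonneg_nonneg prod_powr_nonneg\<close>)

theorem theorem4:
  fixes M :: "'a measure" and N :: "'b measure"
    and X :: "nat \<Rightarrow> 'a \<Rightarrow> real" and Y :: "nat \<Rightarrow> 'b \<Rightarrow> real"
    and F G f g :: "real \<Rightarrow> real" and \<alpha> \<beta> :: "nat \<Rightarrow> real"
    and n1 n2 p1 p2 :: nat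
  assumes "abs_cont_cdf F f" and "abs_cont_cdf G g"
    and "prob_space M" and "prob_space N"
    and "1 \<le> n1" and "1 \<le> n2" and "p1 \<le> n1" and "p2 \<le> n2"
    and "\<And>i. i \<in> {1..n1} \<Longrightarrow> 0 < \<alpha> i"
    and "\<And>i. i \<in> {1..n2} \<Longrightarrow> 0 < \<beta> i"
    and "\<And>i. i \<in> {1..n1} \<Longrightarrow> X i \<in> borel_measurable M"
    and "\<And>i. i \<in> {1..n2} \<Longrightarrow> Y i \<in> borel_measurable N"
    and "prob_space.indep_vars M (\<lambda>_. borel) X {1..n1}"
    and "prob_space.indep_vars N (\<lambda>_. borel) Y {1..n2}"
    and "\<And>i x. i \<in> {1..p1} \<Longrightarrow> measure M {\<omega> \<in> space M. X i \<omega> \<le> x} = F x powr \<alpha> i"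
    and "\<And>i x. i \<in> {p1+1..n1} \<Longrightarrow> measure M {\<omega> \<in> space M. X i \<omega> \<le> x} = G x powr \<alpha> i"
    and "\<And>i x. i \<in> {1..p2} \<Longrightarrow> measure N {\<omega> \<in> space N. Y i \<omega> \<le> x} = F x powr \<beta> i"
    and "\<And>i x. i \<in> {p2+1..n2} \<Longrightarrow> measure N {\<omega> \<in> space N. Y i \<omega> \<le> x} = G x powr \<beta> i"
    and "(\<Sum>i=1..p1. \<alpha> i) > (\<Sum>i=1..p2. \<beta> i)"
    and "(\<Sum>i=p1+1..n1. \<alpha> i) > (\<Sum>i=p2+1..n2. \<beta> i)"
  shows "rh_le (max_cdf N Y n2) (max_cdf M X n1)"
proof -
  have "0 \<le> (\<Sum>i=1..p2. \<beta> i)" "0 \<le> (\<Sum>i=p2+1..n2. \<beta> i)"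
    using assms(8,10) by (auto intro!: sum_nonneg simp: less_imp_le)
  then have "{1..p1} \<noteq> {}" "{p1+1..n1} \<noteq> {}"
    using assms(19,20) by force+
  moreover have "max_cdf M X n1 =
      (\<lambda>x. (\<Prod>i\<in>{1..p1}. F x powr \<alpha> i) * (\<Prod>i\<in>{p1+1..n1}. G x powr \<alpha> i))"
    using assms(3,13,5,7,15,16) by (rule max_cdf_eq_prod_powr)
  moreover have "max_cdf N Y n2 =
      (\<lambda>x. (\<Prod>i\<in>{1..p2}. F x powr \<beta> i) * (\<Prod>i\<in>{p2+1..n2}. G x powr \<beta> i))"
    using assms(4,14,6,8,17,18) by (rule max_cdf_eq_prod_powr)
  ultimately show ?thesis
    using abs_cont_cdf_mono[OF assms(1)] abs_cont_cdf_mono[OF assms(2)]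
      abs_cont_cdf_nonneg[OF assms(1)] abs_cont_cdf_nonneg[OF assms(2)] assms(8,10,19,20)
    by (auto intro!: rh_le_prod_powr simp: less_imp_le)
qed

end
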